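(* Let $\sigma\in\Sigma$, $q>0$, $K=[-q\mathbf 1,q\mathbf 1]$, and assume $\sigma$ takes at least one finite value on $K$ (so $I(K,\sigma)$ is finite). Fix $t>0$. Then there are finite positive constants $C_1,C_2$ (not depending on $\sigma$) and a finite number $v_0(\sigma)$ such that for all $v\ge v_0(\sigma)$, $$P^\sigma\{\Psi_{q,I(K,\sigma)}(\sigma(t))>v\}\le C_1\exp(-C_2v^{1/(d+1)}).$$
   Context: Order: for $x,y\in\mathbb R^d$, $x\le y$ iff $x_i\le y_i$ for all $i$; $\mathbf 1=(1,\dots,1)$; $|x|_\infty=\max_i|x_i|$; $d\ge2$. $\mathbb Z^*=\mathbb Z\cup\{\pm\infty\}$. The state space $\Sigma$ is the set of functions $\sigma:\mathbb R^d\to\mathbb Z^*$ such that (i) $x\le y$ implies $\sigma(x)\le\sigma(y)$; (ii) for every cube $[-q\mathbf 1,q\mathbf 1]$ there are finite partitions $-q=s_i^0<\dots<s_i^{m_i}=q$ of each coordinate axis such that $\sigma$ is constant on each rectangle $\prod_i[s_i^{k_i},s_i^{k_i+1})$; (iii) for every $b\in\mathbb R^d$, $\lim_{M\to\infty}\sup\{|y|_\infty^{-d/(d+1)}\sigma(y):y\le b,|y|_\infty\ge M\}=-\infty$. Dynamics: a rate-one Poisson point process on $\mathbb R^d\times(0,\infty)$; $\mathbf H((y,0),(x,t))$ is the maximal number of Poisson points on a strictly increasing chain (coordinatewise order in $\mathbb R^{d+1}$) in $\{(\eta,s):y<\eta\le x,0<s\le t\}$; from $\sigma$, $\sigma(x,t)=\sup_{y\le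 x}\{\sigma(y)+\mathbf H((y,0),(x,t))\}$, $\sigma(t)=\sigma(\cdot,t)$, with law $P^\sigma$. $I(K,\sigma)=\min\{\sigma(x):x\in K,\ \sigma(x)\text{ finite}\}$. For $q>0$, $k\in\mathbb Z$ and a function $\rho:\mathbb R^d\to\mathbb Z^*$, $\Psi_{q,k}(\rho)=\sup_{x\le q\mathbf 1}\frac{|x|_\infty^d}{(1\vee\{k-\rho(x)\})^{d+1}}$, with the conventions $k-(-\infty)=+\infty$, $k-(+\infty)=-\infty$, and $a/\infty=0$. *)

theory Defs
  imports "HOL-Analysis.Analysis" "HOL-Probability.Probability"
begin

text \<open>Points of R^d are vectors \<open>real ^ 'd\<close>; the order \<open>x \<le> y\<close> is the library's
  coordinatewise order on vectors, and \<open>1 = (\<chi> i. 1)\<close>.  Values in Z* = Z \<union> {+-oo}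
  are represented as extended reals that are integers or infinite.\<close>

definition linf :: "real ^ 'd \<Rightarrow> real" where
  "linf x = Max (range (\<lambda>i. \<bar>x $ i\<bar>))"

definition vlt :: "real ^ 'd \<Rightarrow> real ^ 'd \<Rightarrow> bool" where
  "vlt x y \<longleftrightarrow> (\<forall>i. x $ i < y $ i)"

definition slt :: "((real ^ 'd) \<times> real) \<Rightarrow> ((real ^ 'd) \<times> real) \<Rightarrow> bool" where
  "slt p p' \<longleftrightarrow> vlt (fst p) (fst p') \<and> snd p < snd p'"

definition zstar :: "ereal set" where
  "zstar = range (\<lambda>n::int. ereal (of_int n)) \<union> {\<infinity>, -\<infinity>}"

definition state_space :: "(real ^ 'd \<Rightarrow> ereal) set" where
  "state_space = {\<sigma>.
     (\<forall>x. \<sigma> x \<in> zstar) \<and>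
     (\<forall>x y. x \<le> y \<longrightarrow> \<sigma> x \<le> \<sigma> y) \<and>
     (\<forall>q>0. \<exists>S :: 'd \<Rightarrow> real set.
         (\<forall>i. finite (S i) \<and> -q \<in> S i \<and> q \<in> S i \<and> S i \<subseteq> {-q..q}) \<and>
         (\<forall>x y. (\<forall>i. x $ i \<in> {-q..<q} \<and> y $ i \<in> {-q..<q} \<and>
                     (\<forall>s\<in>S i. s \<le> x $ i \<longleftrightarrow> s \<le> y $ i)) \<longrightarrow> \<sigma> x = \<sigma> y)) \<and>
     (\<forall>b. ((\<lambda>M. SUP y\<in>{y. y \<le> b \<and> linf y \<ge> M}.
              ereal (linf y powr (- (real CARD('d) / (real CARD('d) + 1)))) * \<sigma> y)
           \<longlongrightarrow> -\<infinity>) at_top)}"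

text \<open>Rate-one Poisson point process on R^d \<times> (0,oo), given as a random set of points
  \<open>PP \<omega>\<close> on a probability space M: for every bounded Borel set B \<subseteq> R^d \<times> (0,oo),
  the number of points in B is Poisson distributed with mean Leb(B), and the counts in
  finitely many pairwise disjoint such sets are independent.\<close>
definition npts :: "('w \<Rightarrow> ((real ^ 'd) \<times> real) set) \<Rightarrow> ((real ^ 'd) \<times> real) set \<Rightarrow> 'w \<Rightarrow> nat" where
  "npts PP B \<omega> = card (PP \<omega> \<inter> B)"

definition admissible_set :: "((real ^ 'd) \<times> real) set \<Rightarrow> bool" where
  "admissible_set B \<longleftrightarrow> B \<in> sets borel \<and> bounded B \<and> B \<subseteq> UNIV \<times> {0<..}"

definition poisson_process ::
  "'w measure \<Rightarrow> ('w \<Rightarrow> ((real ^ 'd) \<times> real) set) \<Rightarrow> bool" where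
  "poisson_process M PP \<longleftrightarrow> prob_space M \<and>
     (\<forall>B. admissible_set B \<longrightarrow>
        (\<forall>k::nat. {\<omega>\<in>space M. finite (PP \<omega> \<inter> B) \<and> npts PP B \<omega> = k} \<in> sets M \<and>
           measure M {\<omega>\<in>space M. finite (PP \<omega> \<inter> B) \<and> npts PP B \<omega> = k}
             = measure lborel B ^ k / fact k * exp (- measure lborel B))) \<and>
     (\<forall>(I::nat set) B. finite I \<and> (\<forall>i\<in>I. admissible_set (B i)) \<and> disjoint_family_on B I
        \<longrightarrow> prob_space.indep_vars M (\<lambda>_. count_space UNIV) (\<lambda>i. npts PP (B i)) I)"

text \<open>H((y,0),(x,t)): maximal number of Poisson points on a strictly increasing chain in
  {(eta,s). y < eta \<le> x, 0 < s \<le> t}.\<close>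
definition Hpp :: "((real ^ 'd) \<times> real) set \<Rightarrow> real ^ 'd \<Rightarrow> real ^ 'd \<Rightarrow> real \<Rightarrow> ereal" where
  "Hpp P y x t = (SUP ps\<in>{ps. sorted_wrt slt ps \<and>
        set ps \<subseteq> P \<inter> {(\<eta>, s). vlt y \<eta> \<and> \<eta> \<le> x \<and> 0 < s \<and> s \<le> t}}. ereal (real (length ps)))"

definition evolve :: "(real ^ 'd \<Rightarrow> ereal) \<Rightarrow> ((real ^ 'd) \<times> real) set \<Rightarrow> real \<Rightarrow> real ^ 'd \<Rightarrow> ereal" where
  "evolve \<sigma> P t x = (SUP y\<in>{y. y \<le> x}. \<sigma> y + Hpp P y x t)"

definition Imin :: "(real ^ 'd) set \<Rightarrow> (real ^ 'd \<Rightarrow> ereal) \<Rightarrow> ereal" where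
  "Imin K \<sigma> = Inf {\<sigma> x | x. x \<in> K \<and> \<sigma> x \<noteq> \<infinity> \<and> \<sigma> x \<noteq> -\<infinity>}"

text \<open>Psi_{q,k}(rho) = sup_{x \<le> q1} |x|^d / (1 \<or> (k - rho x))^(d+1), computed in the
  extended reals (so k - (-oo) = oo, k - oo = -oo, a/oo = 0).\<close>
definition Psi :: "real \<Rightarrow> ereal \<Rightarrow> (real ^ 'd \<Rightarrow> ereal) \<Rightarrow> ereal" where
  "Psi q k \<rho> = (SUP x\<in>{x. x \<le> q *\<^sub>R 1}.
      ereal (linf x ^ CARD('d)) / (max 1 (k - \<rho> x)) ^ (CARD('d) + 1))"

end

(*
  If Psi_{q,k}(sigma(t)) > v, some x <= q1 has |x|^d > v and sigma(x,t) > k - |x|^(d/(d+1)).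
  Far from the origin sigma(y) <= -(2c+3) |y|^(d/(d+1)) (condition (iii) on the state space),
  so a value of sigma(x,t) that large needs a chain of m >= c v^(1/(d+1)) Poisson points
  between some (y,0) and (x,t); these points lie in a space-time box of side
  R_m = (m/c)^((d+1)/d) and height t. Cut this box into m^(d+1) congruent cells. A chain of
  m points visits its cells along one of at most 4^((d+1)m) monotone paths, and the m cells of
  a fixed path hold m Poisson points with probability at most (e * cell volume)^m, which is
  8^(-(d+1)m) for c^(d+1) = e 8^(d+1) t. Hence a chain of length m has probability at most
  2^(-m), and summing over m >= c v^(1/(d+1)) gives 4 exp(-(c ln 2 / 2) v^(1/(d+1))).
*)

theory Submission
  imports Defs
begin

section \<open>Monotone paths\<close>

definition monotone_paths :: "nat \<Rightarrow> nat \<Rightarrow> (nat \<Rightarrow> nat) set" where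
  "monotone_paths n k = {f \<in> {..<n} \<rightarrow>\<^sub>E {..k}. mono_on {..<n} f}"

lemma finite_monotone_paths: "finite (monotone_paths n k)"
  unfolding monotone_paths_def
  by (rule finite_subset[OF _ finite_PiE[of "{..<n}" "\<lambda>_. {..k}"]]) auto

lemma monotone_paths_shift_strict:
  assumes "f \<in> monotone_paths n k"
  shows "sorted_wrt (<) (map (\<lambda>j. j + f j) [0..<n])"
proof -
  have "i + f i < j + f j" if "i < j" "j < n" for i j
  proof -
    have "f i \<le> f j" using assms that by (simp add: monotone_paths_def mono_on_def)
    then show ?thesis using that by linarith
  qed
  then show ?thesis
    unfolding sorted_wrt_map by (rule sorted_wrt_mono_rel[OF _ sorted_wrt_upt]) auto
qed

lemma inj_on_monotone_paths_shift:
  "inj_on (\<lambda>f. (\<lambda>j. j + f j) ` {..<n}) (monotone_paths n k)"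
proof (rule inj_onI)
  fix f g
  assume f: "f \<in> monotone_paths n k" and g: "g \<in> monotone_paths n k"
    and eq: "(\<lambda>j. j + f j) ` {..<n} = (\<lambda>j. j + g j) ` {..<n}"
  have "map (\<lambda>j. j + f j) [0..<n] = map (\<lambda>j. j + g j) [0..<n]"
    using monotone_paths_shift_strict[OF f] monotone_paths_shift_strict[OF g] eq
    by (intro sorted_distinct_set_unique) (simp_all add: strict_sorted_iff atLeast0LessThan)
  then have "\<forall>j<n. f j = g j" by simp
  moreover have "f \<in> {..<n} \<rightarrow>\<^sub>E {..k}" "g \<in> {..<n} \<rightarrow>\<^sub>E {..k}"
    using f g by (simp_all add: monotone_paths_def)
  ultimately show "f = g" by (intro PiE_ext) auto
qed

lemma card_monotone_paths_le: "card (monotone_paths n k) \<le> 2 ^ (n + k)"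
proof -
  have "j + f j < n + k" if "f \<in> monotone_paths n k" "j < n" for f j
  proof -
    have "f j \<le> k" using that by (auto simp: monotone_paths_def)
    then show ?thesis using that(2) by linarith
  qed
  then have "(\<lambda>f. (\<lambda>j. j + f j) ` {..<n}) ` monotone_paths n k \<subseteq> Pow {..<n + k}"
    by auto
  then have "card (monotone_paths n k) \<le> card (Pow {..<n + k})"
    by (intro card_inj_on_le[OF inj_on_monotone_paths_shift]) auto
  then show ?thesis by (simp add: card_Pow)
qed

section \<open>Poisson tail bound\<close>

lemma power_div_fact_le_exp:
  fixes x :: real assumes "0 \<le> x"
  shows "x ^ n / fact n \<le> exp x"
proof -
  obtain s where "exp x = (\<Sum>m<Suc n. x ^ m / fact m) + exp s / fact (Suc n) * x ^ Suc n"
    using Maclaurin_exp_le[of x "Suc n"] by blast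
  moreover have "x ^ n / fact n \<le> (\<Sum>m<Suc n. x ^ m / fact m)"
    using assms by (intro member_le_sum) auto
  moreover have "0 \<le> exp s / fact (Suc n) * x ^ Suc n" using assms by auto
  ultimately show ?thesis by linarith
qed

lemma exp_partial_sum_tail_le:
  fixes x :: real assumes "0 \<le> x"
  shows "1 - exp (- x) * (\<Sum>m<n. x ^ m / fact m) \<le> x ^ n / fact n"
proof -
  obtain s where s: "\<bar>s\<bar> \<le> \<bar>x\<bar>" "exp x = (\<Sum>m<n. x ^ m / fact m) + exp s / fact n * x ^ n"
    using Maclaurin_exp_le[of x n] by blast
  have "exp s \<le> exp x" using s(1) assms by simp
  have "exp x - (\<Sum>m<n. x ^ m / fact m) = exp s * (x ^ n / fact n)" using s(2) by simp
  also have "\<dots> \<le> exp x * (x ^ n / fact n)"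
    using \<open>exp s \<le> exp x\<close> assms by (intro mult_right_mono) auto
  finally have "exp (- x) * (exp x - (\<Sum>m<n. x ^ m / fact m)) \<le> x ^ n / fact n"
    by (simp add: exp_minus field_simps)
  then show ?thesis by (simp add: right_diff_distrib exp_minus[symmetric] exp_add[symmetric])
qed

lemma poisson_process_at_least_le:
  fixes n :: nat
  assumes pp: "poisson_process M PP" and B: "admissible_set B"
  defines "E \<equiv> {\<omega>\<in>space M. infinite (PP \<omega> \<inter> B) \<or> n \<le> npts PP B \<omega>}"
  shows "E \<in> sets M \<and> measure M E \<le> measure lborel B ^ n / fact n"
proof -
  interpret prob_space M using pp by (simp add: poisson_process_def)
  define \<mu> where "\<mu> = measure lborel B"
  define N where "N k = {\<omega>\<in>space M. finite (PP \<omega> \<inter> B) \<and> npts PP B \<omega> = k}" for k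
  have N: "N k \<in> sets M \<and> measure M (N k) = \<mu> ^ k / fact k * exp (- \<mu>)" for k
    using pp B unfolding poisson_process_def N_def \<mu>_def by blast
  have compl: "E = space M - (\<Union>k<n. N k)" unfolding E_def N_def by auto
  have "measure M (\<Union>k<n. N k) = (\<Sum>k<n. measure M (N k))"
    using N by (intro finite_measure_finite_Union) (auto simp: disjoint_family_on_def N_def)
  also have "\<dots> = exp (- \<mu>) * (\<Sum>k<n. \<mu> ^ k / fact k)"
    using N by (simp add: sum_distrib_left mult.commute)
  finally have "prob (\<Union>k<n. N k) = exp (- \<mu>) * (\<Sum>k<n. \<mu> ^ k / fact k)" .
  moreover have U: "(\<Union>k<n. N k) \<in> events" using N by auto
  ultimately show ?thesis
    unfolding compl using prob_compl[OF U] exp_partial_sum_tail_le[of \<mu> n] by (simp add: \<mu>_def)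
qed

section \<open>Long chains in a space-time box are unlikely\<close>

definition has_chain ::
  "((real ^ 'd) \<times> real) set \<Rightarrow> nat \<Rightarrow> ((real ^ 'd) \<times> real) set \<Rightarrow> bool" where
  "has_chain P m B \<longleftrightarrow> (\<exists>ps. sorted_wrt slt ps \<and> length ps = m \<and> set ps \<subseteq> P \<inter> B)"

definition space_time_box :: "real \<Rightarrow> real \<Rightarrow> real \<Rightarrow> ((real ^ 'd) \<times> real) set" where
  "space_time_box lo R t = {(\<eta>, s). (\<forall>i. lo < \<eta> $ i \<and> \<eta> $ i \<le> lo + R) \<and> 0 < s \<and> s \<le> t}"

definition grid_cell ::
  "real \<Rightarrow> real \<Rightarrow> real \<Rightarrow> ('d \<Rightarrow> nat) \<Rightarrow> nat \<Rightarrow> ((real ^ 'd) \<times> real) set" where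
  "grid_cell lo h \<tau> c c' =
     cbox ((\<chi> i. lo + real (c i) * h), real c' * \<tau>)
       ((\<chi> i. lo + (real (c i) + 1) * h), (real c' + 1) * \<tau>)
     \<inter> (UNIV \<times> {0<..})"

(* F i j and g j are the space index in coordinate i and the time index of the j-th cell. *)
definition cell_path :: "real \<Rightarrow> real \<Rightarrow> real \<Rightarrow> nat \<Rightarrow> ('d \<Rightarrow> nat \<Rightarrow> nat) \<Rightarrow> (nat \<Rightarrow> nat)
    \<Rightarrow> ((real ^ 'd) \<times> real) set" where
  "cell_path lo h \<tau> m F g = (\<Union>j<m. grid_cell lo h \<tau> (\<lambda>i. F i j) (g j))"

lemma sorted_slt_distinct: "sorted_wrt slt ps \<Longrightarrow> distinct ps"
  by (induction ps) (auto simp: slt_def)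

lemma has_chain_mono: "has_chain P m B \<Longrightarrow> B \<subseteq> B' \<Longrightarrow> has_chain P m B'"
  unfolding has_chain_def by blast

lemma grid_cell_borel: "grid_cell lo h \<tau> c c' \<in> sets borel"
  unfolding grid_cell_def by (intro sets.Int borel_closed borel_open closed_cbox open_Times) auto

lemma grid_cell_measure_le:
  assumes "0 \<le> h" "0 \<le> \<tau>"
  shows "measure lborel (grid_cell lo h \<tau> (c :: 'd::finite \<Rightarrow> nat) c') \<le> h ^ CARD('d) * \<tau>"
proof -
  define a :: "real ^ 'd" where "a = (\<chi> i. lo + real (c i) * h)"
  define b :: "real ^ 'd" where "b = (\<chi> i. lo + (real (c i) + 1) * h)"
  have "measure lborel (grid_cell lo h \<tau> c c')
      \<le> measure lborel (cbox (a, real c' * \<tau>) (b, (real c' + 1) * \<tau>))"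
    unfolding grid_cell_def a_def b_def
    by (rule measure_mono_fmeasurable) (auto intro: grid_cell_borel[unfolded grid_cell_def])
  also have "\<dots> = measure lborel (cbox a b) * measure lborel (cbox (real c' * \<tau>) ((real c' + 1) * \<tau>))"
    by (rule content_Pair)
  also have "measure lborel (cbox a b) = h ^ CARD('d)"
  proof -
    have "a \<in> cbox a b" using assms by (simp add: mem_box_cart a_def b_def algebra_simps)
    then have "cbox a b \<noteq> {}" by blast
    then show ?thesis by (simp add: content_cbox_cart a_def b_def algebra_simps)
  qed
  also have "measure lborel (cbox (real c' * \<tau>) ((real c' + 1) * \<tau>)) = \<tau>"
    using assms by (simp add: algebra_simps)
  finally show ?thesis by simp
qed

lemma cell_path_admissible: "admissible_set (cell_path lo h \<tau> m F g)"
  unfolding admissible_set_def cell_path_def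
proof (intro conjI)
  show "(\<Union>j<m. grid_cell lo h \<tau> (\<lambda>i. F i j) (g j)) \<in> sets borel"
    using grid_cell_borel by (intro sets.finite_UN) auto
  show "bounded (\<Union>j<m. grid_cell lo h \<tau> (\<lambda>i. F i j) (g j))"
    unfolding grid_cell_def by (intro bounded_UN ballI bounded_subset[OF bounded_cbox]) auto
  show "(\<Union>j<m. grid_cell lo h \<tau> (\<lambda>i. F i j) (g j)) \<subseteq> UNIV \<times> {0<..}"
    unfolding grid_cell_def by auto
qed

lemma cell_path_measure_le:
  assumes "0 \<le> h" "0 \<le> \<tau>"
  shows "measure lborel (cell_path lo h \<tau> m (F :: 'd::finite \<Rightarrow> nat \<Rightarrow> nat) g)
    \<le> real m * (h ^ CARD('d) * \<tau>)"
proof -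
  have "measure lborel (cell_path lo h \<tau> m F g)
      \<le> (\<Sum>j<m. measure lborel (grid_cell lo h \<tau> (\<lambda>i. F i j) (g j)))"
    unfolding cell_path_def by (rule measure_UNION_le) (use grid_cell_borel in auto)
  also have "\<dots> \<le> (\<Sum>j<m. h ^ CARD('d) * \<tau>)"
    by (intro sum_mono grid_cell_measure_le assms)
  finally show ?thesis by simp
qed

lemma grid_index_bounds:
  fixes h lo x :: real
  assumes h: "0 < h" and x: "lo < x" "x \<le> lo + real m * h"
  defines "k \<equiv> nat \<lfloor>(x - lo) / h\<rfloor>"
  shows "k \<le> m \<and> lo + real k * h \<le> x \<and> x \<le> lo + (real k + 1) * h"
proof -
  define z where "z = (x - lo) / h"
  have z0: "0 < z" and zm: "z \<le> real m" using h x by (simp_all add: z_def divide_le_eq mult.commute)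
  have k: "real k = of_int \<lfloor>z\<rfloor>" using z0 by (simp add: k_def z_def)
  have "k \<le> m" using zm z0 unfolding k_def z_def[symmetric] by (metis floor_of_nat floor_mono nat_int nat_mono)
  moreover have "of_int \<lfloor>z\<rfloor> * h \<le> z * h" "z * h \<le> (of_int \<lfloor>z\<rfloor> + 1) * h"
    using h by (intro mult_right_mono; linarith)+
  moreover have "x = lo + z * h" using h by (simp add: z_def)
  ultimately show ?thesis unfolding k by linarith
qed

lemma grid_indices_monotone_path:
  fixes x :: "nat \<Rightarrow> real"
  assumes h: "0 < h" and range: "\<And>j. j < m \<Longrightarrow> lo < x j \<and> x j \<le> lo + real m * h"
    and mono: "\<And>j j'. j \<le> j' \<Longrightarrow> j' < m \<Longrightarrow> x j \<le> x j'"
  shows "restrict (\<lambda>j. nat \<lfloor>(x j - lo) / h\<rfloor>) {..<m} \<in> monotone_paths m m"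
proof -
  have "nat \<lfloor>(x j - lo) / h\<rfloor> \<le> m" if "j < m" for j
    using grid_index_bounds[OF h] range[OF that] by blast
  moreover have "nat \<lfloor>(x j - lo) / h\<rfloor> \<le> nat \<lfloor>(x j' - lo) / h\<rfloor>" if "j \<le> j'" "j' < m" for j j'
    using h mono[OF that] by (intro nat_mono floor_mono divide_right_mono) auto
  ultimately show ?thesis by (auto simp: monotone_paths_def mono_on_def)
qed

lemma chain_in_cell_path:
  fixes ps :: "((real ^ 'd) \<times> real) list"
  assumes h: "0 < h" and \<tau>: "0 < \<tau>" and srt: "sorted_wrt slt ps" and len: "length ps = m"
    and box: "set ps \<subseteq> space_time_box lo (real m * h) (real m * \<tau>)"
  obtains F g where "\<forall>i. F i \<in> monotone_paths m m" and "g \<in> monotone_paths m m"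
    and "set ps \<subseteq> cell_path lo h \<tau> m F g"
proof -
  let ?x = "\<lambda>i j. fst (ps ! j) $ i" and ?s = "\<lambda>j. snd (ps ! j)"
  define F where "F i = restrict (\<lambda>j. nat \<lfloor>(?x i j - lo) / h\<rfloor>) {..<m}" for i
  \<comment> \<open>the time grid starts at 0; the explicit 0 lets \<open>grid_index_bounds\<close> apply with lo = 0\<close>
  define g where "g = restrict (\<lambda>j. nat \<lfloor>(?s j - 0) / \<tau>\<rfloor>) {..<m}"
  have in_box: "(\<forall>i. lo < ?x i j \<and> ?x i j \<le> lo + real m * h) \<and> 0 < ?s j \<and> ?s j \<le> 0 + real m * \<tau>"
    if "j < m" for j
  proof -
    have "ps ! j \<in> space_time_box lo (real m * h) (real m * \<tau>)" using box that len by auto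
    then show ?thesis by (cases "ps ! j") (simp add: space_time_box_def)
  qed
  have ordered: "?x i j \<le> ?x i j' \<and> ?s j \<le> ?s j'" if "j \<le> j'" "j' < m" for i j j'
  proof (cases "j = j'")
    case False
    then have "slt (ps ! j) (ps ! j')" using sorted_wrt_nth_less[OF srt] that len by simp
    then show ?thesis by (simp add: slt_def vlt_def less_imp_le)
  qed simp
  have F: "F i \<in> monotone_paths m m" for i
    unfolding F_def using h in_box ordered by (intro grid_indices_monotone_path) auto
  have g: "g \<in> monotone_paths m m"
    unfolding g_def using \<tau> in_box ordered by (intro grid_indices_monotone_path) auto
  have in_cell: "ps ! j \<in> grid_cell lo h \<tau> (\<lambda>i. F i j) (g j)" if j: "j < m" for j
  proof -
    have "lo + real (F i j) * h \<le> ?x i j \<and> ?x i j \<le> lo + (real (F i j) + 1) * h" for i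
      using grid_index_bounds[OF h, of lo "?x i j" m] in_box[OF j] j by (simp add: F_def)
    moreover have "real (g j) * \<tau> \<le> ?s j \<and> ?s j \<le> (real (g j) + 1) * \<tau>"
      using grid_index_bounds[OF \<tau>, of 0 "?s j" m] in_box[OF j] j by (simp add: g_def)
    ultimately show ?thesis
      using in_box[OF j] by (cases "ps ! j") (auto simp: grid_cell_def mem_box_cart cbox_Pair_eq)
  qed
  have "set ps \<subseteq> cell_path lo h \<tau> m F g"
  proof
    fix p assume "p \<in> set ps"
    then obtain j where "j < m" "p = ps ! j" using len by (auto simp: in_set_conv_nth)
    with in_cell show "p \<in> cell_path lo h \<tau> m F g" unfolding cell_path_def by blast
  qed
  with F g show thesis by (intro that) auto
qed

lemma prob_cell_path_at_least_le:
  fixes F :: "'d::finite \<Rightarrow> nat \<Rightarrow> nat" and g :: "nat \<Rightarrow> nat" and lo :: real and m :: nat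
  assumes pp: "poisson_process M PP" and h: "0 \<le> h" and \<tau>: "0 \<le> \<tau>"
  defines "U \<equiv> cell_path lo h \<tau> m F g"
  shows "{\<omega>\<in>space M. infinite (PP \<omega> \<inter> U) \<or> m \<le> npts PP U \<omega>} \<in> sets M \<and>
    measure M {\<omega>\<in>space M. infinite (PP \<omega> \<inter> U) \<or> m \<le> npts PP U \<omega>} \<le> (exp 1 * (h ^ CARD('d) * \<tau>)) ^ m"
proof -
  define a where "a = h ^ CARD('d) * \<tau>"
  have a: "0 \<le> a" using h \<tau> by (simp add: a_def)
  have "measure lborel U ^ m / fact m \<le> (real m * a) ^ m / fact m"
    unfolding U_def a_def using cell_path_measure_le[OF h \<tau>]
    by (intro divide_right_mono power_mono) auto
  also have "\<dots> = a ^ m * (real m ^ m / fact m)" by (simp add: power_mult_distrib)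
  also have "\<dots> \<le> a ^ m * exp (real m)"
    using a by (intro mult_left_mono power_div_fact_le_exp) auto
  also have "\<dots> = (exp 1 * a) ^ m"
    by (simp add: power_mult_distrib exp_of_nat_mult[symmetric])
  finally have "measure lborel U ^ m / fact m \<le> (exp 1 * (h ^ CARD('d) * \<tau>)) ^ m"
    unfolding a_def .
  moreover have "admissible_set U" unfolding U_def by (rule cell_path_admissible)
  ultimately show ?thesis using poisson_process_at_least_le[OF pp, of U m] by (blast intro: order_trans)
qed

definition cell_path_indices :: "nat \<Rightarrow> (('d::finite \<Rightarrow> nat \<Rightarrow> nat) \<times> (nat \<Rightarrow> nat)) set" where
  "cell_path_indices m = (UNIV \<rightarrow>\<^sub>E monotone_paths m m) \<times> monotone_paths m m"

lemma finite_cell_path_indices: "finite (cell_path_indices m)"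
  unfolding cell_path_indices_def
  by (intro finite_cartesian_product finite_PiE finite_monotone_paths) auto

lemma card_cell_path_indices_le:
  "card (cell_path_indices m :: (('d::finite \<Rightarrow> _) \<times> _) set) \<le> 4 ^ ((CARD('d) + 1) * m)"
proof -
  have "card (cell_path_indices m :: (('d \<Rightarrow> _) \<times> _) set)
      \<le> (2 ^ (m + m)) ^ CARD('d) * 2 ^ (m + m)"
    unfolding cell_path_indices_def card_cartesian_product card_PiE[OF finite_class.finite_UNIV]
      prod_constant
    by (intro mult_le_mono power_mono card_monotone_paths_le zero_le)
  also have "\<dots> = 4 ^ ((CARD('d) + 1) * m)"
  proof -
    have "(2::nat) ^ (m + m) = 4 ^ m" by (simp add: power_add flip: power_mult_distrib)
    then show ?thesis by (simp only:) (simp add: power_add algebra_simps flip: power_mult)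
  qed
  finally show ?thesis .
qed

lemma chain_imp_crowded_cell_path:
  assumes h: "0 < h" and \<tau>: "0 < \<tau>"
    and chain: "has_chain P m (space_time_box lo (real m * h) (real m * \<tau>))"
  shows "\<exists>p\<in>cell_path_indices m. infinite (P \<inter> cell_path lo h \<tau> m (fst p) (snd p))
    \<or> m \<le> card (P \<inter> cell_path lo h \<tau> m (fst p) (snd p))"
proof -
  obtain ps where srt: "sorted_wrt slt ps" and len: "length ps = m"
    and sub: "set ps \<subseteq> P \<inter> space_time_box lo (real m * h) (real m * \<tau>)"
    using chain by (auto simp: has_chain_def)
  obtain F g where F: "\<forall>i. F i \<in> monotone_paths m m" and g: "g \<in> monotone_paths m m"
    and cells: "set ps \<subseteq> cell_path lo h \<tau> m F g"
    using chain_in_cell_path[OF h \<tau> srt len] sub by blast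
  have "m \<le> card (P \<inter> cell_path lo h \<tau> m F g)" if "finite (P \<inter> cell_path lo h \<tau> m F g)"
    using card_mono[OF that, of "set ps"] sub cells distinct_card[OF sorted_slt_distinct[OF srt]] len
    by auto
  moreover have "(F, g) \<in> cell_path_indices m"
    using F g by (simp add: cell_path_indices_def PiE_UNIV_domain)
  ultimately show ?thesis by (intro bexI[of _ "(F, g)"]) auto
qed

(* Union bound over at most 4^((d+1)m) index pairs, each crowded with probability at most
   8^(-(d+1)m). *)
lemma prob_crowded_cell_path_le:
  fixes PP :: "'w \<Rightarrow> ((real ^ 'd::finite) \<times> real) set" and lo :: real and m :: nat
  assumes pp: "poisson_process M PP" and h: "0 \<le> h" and \<tau>: "0 \<le> \<tau>"
    and cell_size: "exp 1 * (h ^ CARD('d) * \<tau>) \<le> (1/8) ^ (CARD('d) + 1)"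
  defines "A \<equiv> {\<omega>\<in>space M. \<exists>p\<in>cell_path_indices m.
    infinite (PP \<omega> \<inter> cell_path lo h \<tau> m (fst p) (snd p))
    \<or> m \<le> npts PP (cell_path lo h \<tau> m (fst p) (snd p)) \<omega>}"
  shows "A \<in> sets M \<and> measure M A \<le> (1/2) ^ m"
proof -
  interpret prob_space M using pp by (simp add: poisson_process_def)
  let ?d = "CARD('d)" and ?I = "cell_path_indices m :: (('d \<Rightarrow> _) \<times> _) set"
  define N where "N = (?d + 1) * m"
  define T where "T p = {\<omega>\<in>space M. infinite (PP \<omega> \<inter> cell_path lo h \<tau> m (fst p) (snd p))
    \<or> m \<le> npts PP (cell_path lo h \<tau> m (fst p) (snd p)) \<omega>}" for p :: "('d \<Rightarrow> nat \<Rightarrow> nat) \<times> (nat \<Rightarrow> nat)"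
  have A: "A = (\<Union>p\<in>?I. T p)" unfolding A_def T_def by auto
  have T: "T p \<in> events \<and> prob (T p) \<le> (1/8) ^ N" for p
  proof -
    have "(exp 1 * (h ^ ?d * \<tau>)) ^ m \<le> ((1/8) ^ (?d + 1)) ^ m"
      using cell_size h \<tau> by (intro power_mono) auto
    with prob_cell_path_at_least_le[OF pp h \<tau>, of lo m "fst p" "snd p"] show ?thesis
      unfolding T_def N_def power_mult by auto
  qed
  have "real (card ?I) \<le> 4 ^ N"
    using card_cell_path_indices_le[where 'd = 'd, of m] unfolding N_def by (simp flip: of_nat_le_iff)
  have "prob A \<le> (\<Sum>p\<in>?I. prob (T p))"
    unfolding A using T finite_cell_path_indices by (intro finite_measure_subadditive_finite) auto
  also have "\<dots> \<le> real (card ?I) * (1/8) ^ N"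
    using T by (intro sum_bounded_above) auto
  also have "\<dots> \<le> 4 ^ N * (1/8) ^ N"
    using \<open>real (card ?I) \<le> 4 ^ N\<close> by (intro mult_right_mono) auto
  also have "\<dots> = (1/2) ^ N" by (subst power_mult_distrib[symmetric]) simp
  also have "\<dots> \<le> (1/2) ^ m" unfolding N_def by (intro power_decreasing) auto
  finally show ?thesis
    unfolding A using T by (auto intro: sets.finite_UN finite_cell_path_indices)
qed

lemma prob_chain_in_box_le:
  fixes lo R t :: real and PP :: "'w \<Rightarrow> ((real ^ 'd::finite) \<times> real) set"
  assumes pp: "poisson_process M PP" and R: "0 < R" and t: "0 < t"
    and size: "exp 1 * 8 ^ (CARD('d) + 1) * R ^ CARD('d) * t \<le> real m ^ (CARD('d) + 1)"
  shows "\<exists>A\<in>sets M. {\<omega>\<in>space M. has_chain (PP \<omega>) m (space_time_box lo R t)} \<subseteq> A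
    \<and> measure M A \<le> (1/2) ^ m"
proof -
  let ?d = "CARD('d)"
  have "0 < exp 1 * 8 ^ (?d + 1) * R ^ ?d * t" using R t by simp
  then have m: "0 < m" using size by (cases m) auto
  define h where "h = R / real m"
  define \<tau> where "\<tau> = t / real m"
  have h: "0 < h" and \<tau>: "0 < \<tau>" using R t m by (simp_all add: h_def \<tau>_def)
  have "exp 1 * (h ^ ?d * \<tau>) * 8 ^ (?d + 1) = exp 1 * 8 ^ (?d + 1) * R ^ ?d * t / real m ^ (?d + 1)"
    by (simp add: h_def \<tau>_def power_divide mult_ac)
  also have "\<dots> \<le> 1" using size m by (simp add: divide_le_eq)
  finally have cell_size: "exp 1 * (h ^ ?d * \<tau>) \<le> (1/8) ^ (?d + 1)"
    by (simp add: le_divide_eq power_one_over)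
  have box: "space_time_box lo R t = space_time_box lo (real m * h) (real m * \<tau>)"
    using m by (simp add: h_def \<tau>_def)
  note crowded = prob_crowded_cell_path_le[OF pp _ _ cell_size, where lo = lo and m = m]
  have "{\<omega>\<in>space M. has_chain (PP \<omega>) m (space_time_box lo R t)}
      \<subseteq> {\<omega>\<in>space M. \<exists>p\<in>cell_path_indices m.
        infinite (PP \<omega> \<inter> cell_path lo h \<tau> m (fst p) (snd p))
        \<or> m \<le> npts PP (cell_path lo h \<tau> m (fst p) (snd p)) \<omega>}"
    unfolding box using chain_imp_crowded_cell_path[OF h \<tau>] by (auto simp: npts_def)
  with crowded h \<tau> show ?thesis by (meson less_imp_le)
qed

section \<open>Large values of Psi force long chains\<close>

lemma linf_ge: "\<bar>x $ i\<bar> \<le> linf x"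
  unfolding linf_def by (rule Max_ge) auto

lemma linf_attained: "\<exists>i. linf x = \<bar>x $ i\<bar>"
proof -
  have "linf x \<in> range (\<lambda>i. \<bar>x $ i\<bar>)" unfolding linf_def by (rule Max_in) auto
  then show ?thesis by auto
qed

lemma linf_nonneg: "0 \<le> linf x"
  using linf_ge[of x] abs_ge_zero order_trans by blast

lemma linf_le_linf_below:
  fixes x y :: "real ^ 'd::finite"
  assumes "x \<le> q *\<^sub>R 1" and "q < linf x" and "y \<le> x"
  shows "linf x \<le> linf y"
proof -
  obtain i where i: "linf x = \<bar>x $ i\<bar>" using linf_attained by blast
  have "x $ i \<le> q" "y $ i \<le> x $ i" using assms(1,3) by (simp_all add: less_eq_vec_def)
  then have "linf x \<le> \<bar>y $ i\<bar>" using i assms(2) by linarith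
  then show ?thesis using linf_ge order_trans by blast
qed

(* Condition (ii) for the cube of half-width q + 1 covers the closed cube of half-width q:
   there sigma only depends on which grid points lie below each coordinate. *)
lemma finite_image_state_space_cube:
  fixes \<sigma> :: "real ^ 'd::finite \<Rightarrow> ereal"
  assumes \<sigma>: "\<sigma> \<in> state_space" and q: "0 < q"
  shows "finite (\<sigma> ` {-q *\<^sub>R 1 .. q *\<^sub>R 1})"
proof -
  let ?K = "{-q *\<^sub>R 1 .. q *\<^sub>R 1} :: (real ^ 'd) set"
  have "\<exists>S :: 'd \<Rightarrow> real set.
         (\<forall>i. finite (S i) \<and> -(q+1) \<in> S i \<and> q+1 \<in> S i \<and> S i \<subseteq> {-(q+1)..q+1}) \<and>
         (\<forall>x y. (\<forall>i. x $ i \<in> {-(q+1)..<q+1} \<and> y $ i \<in> {-(q+1)..<q+1} \<and>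
                     (\<forall>s\<in>S i. s \<le> x $ i \<longleftrightarrow> s \<le> y $ i)) \<longrightarrow> \<sigma> x = \<sigma> y)"
    using \<sigma> q unfolding state_space_def by (auto simp del: minus_add_distrib)
  then obtain S :: "'d \<Rightarrow> real set" where S: "\<And>i. finite (S i)"
    and const: "\<And>x y. \<forall>i. x $ i \<in> {-(q+1)..<q+1} \<and> y $ i \<in> {-(q+1)..<q+1} \<and>
                     (\<forall>s\<in>S i. s \<le> x $ i \<longleftrightarrow> s \<le> y $ i) \<Longrightarrow> \<sigma> x = \<sigma> y"
    by blast
  define pattern where "pattern x = (\<lambda>i. {s\<in>S i. s \<le> x $ i})" for x :: "real ^ 'd"
  have in_strip: "x $ i \<in> {-(q+1)..<q+1}" if "x \<in> ?K" for x i
  proof -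
    have "- q \<le> x $ i" "x $ i \<le> q" using that by (simp_all add: less_eq_vec_def)
    then show ?thesis by simp
  qed
  have same: "\<sigma> x = \<sigma> y" if "x \<in> ?K" "y \<in> ?K" "pattern x = pattern y" for x y
  proof (rule const, intro allI conjI)
    fix i
    show "x $ i \<in> {-(q+1)..<q+1}" "y $ i \<in> {-(q+1)..<q+1}" using in_strip that by blast+
    have "{s\<in>S i. s \<le> x $ i} = {s\<in>S i. s \<le> y $ i}" using that(3) unfolding pattern_def by metis
    then show "\<forall>s\<in>S i. s \<le> x $ i \<longleftrightarrow> s \<le> y $ i" by blast
  qed
  have "finite (pattern ` ?K)"
    by (rule finite_subset[OF _ finite_PiE[of UNIV "\<lambda>i. Pow (S i)"]]) (auto simp: pattern_def S)
  moreover have "\<sigma> ` ?K \<subseteq> (\<lambda>T. \<sigma> (inv_into ?K pattern T)) ` pattern ` ?K"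
  proof
    fix z assume "z \<in> \<sigma> ` ?K"
    then obtain x where x: "x \<in> ?K" "z = \<sigma> x" by blast
    have "inv_into ?K pattern (pattern x) \<in> ?K" "pattern (inv_into ?K pattern (pattern x)) = pattern x"
      using x(1) by (blast intro: inv_into_into f_inv_into_f)+
    then have "z = \<sigma> (inv_into ?K pattern (pattern x))" using same x by metis
    then show "z \<in> (\<lambda>T. \<sigma> (inv_into ?K pattern T)) ` pattern ` ?K" using x(1) by blast
  qed
  ultimately show ?thesis by (meson finite_imageI finite_subset)
qed

lemma Imin_finite:
  fixes \<sigma> :: "real ^ 'd::finite \<Rightarrow> ereal"
  assumes \<sigma>: "\<sigma> \<in> state_space" and q: "0 < q"
    and x0: "x0 \<in> {-q *\<^sub>R 1 .. q *\<^sub>R 1}" "\<sigma> x0 \<noteq> \<infinity>" "\<sigma> x0 \<noteq> -\<infinity>"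
  shows "\<exists>k. Imin {-q *\<^sub>R 1 .. q *\<^sub>R 1} \<sigma> = ereal k"
proof -
  define V where "V = {\<sigma> x | x. x \<in> {-q *\<^sub>R 1 .. q *\<^sub>R 1} \<and> \<sigma> x \<noteq> \<infinity> \<and> \<sigma> x \<noteq> -\<infinity>}"
  have "finite V"
    by (rule finite_subset[OF _ finite_image_state_space_cube[OF \<sigma> q]]) (auto simp: V_def)
  moreover have "V \<noteq> {}" using x0 by (auto simp: V_def)
  ultimately have "Inf V \<in> V" by (simp add: Min_Inf[symmetric])
  then obtain x where "Inf V = \<sigma> x" "\<sigma> x \<noteq> \<infinity>" "\<sigma> x \<noteq> -\<infinity>" unfolding V_def by blast
  then show ?thesis unfolding Imin_def V_def[symmetric] by (cases "\<sigma> x") auto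
qed

lemma state_space_decay:
  fixes \<sigma> :: "real ^ 'd::finite \<Rightarrow> ereal" and b :: "real ^ 'd" and L :: real
  defines "\<theta> \<equiv> real CARD('d) / (real CARD('d) + 1)"
  assumes "\<sigma> \<in> state_space"
  shows "\<exists>M0. \<forall>y. y \<le> b \<and> M0 \<le> linf y \<longrightarrow> \<sigma> y \<le> ereal (- L * linf y powr \<theta>)"
proof -
  have "((\<lambda>M. SUP y\<in>{y. y \<le> b \<and> linf y \<ge> M}. ereal (linf y powr (- \<theta>)) * \<sigma> y) \<longlongrightarrow> -\<infinity>) at_top"
    using assms unfolding state_space_def \<theta>_def by blast
  then have "eventually (\<lambda>M. (SUP y\<in>{y. y \<le> b \<and> linf y \<ge> M}. ereal (linf y powr (- \<theta>)) * \<sigma> y) < ereal (- L)) at_top"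
    by (rule order_tendstoD(2)) simp
  then obtain M1 where M1: "\<And>M. M1 \<le> M \<Longrightarrow>
      (SUP y\<in>{y. y \<le> b \<and> linf y \<ge> M}. ereal (linf y powr (- \<theta>)) * \<sigma> y) < ereal (- L)"
    unfolding eventually_at_top_linorder by blast
  have "\<sigma> y \<le> ereal (- L * linf y powr \<theta>)" if y: "y \<le> b" "max M1 1 \<le> linf y" for y
  proof -
    define r where "r = linf y"
    have r: "1 \<le> r" using y by (simp add: r_def)
    have "ereal (r powr (- \<theta>)) * \<sigma> y
        \<le> (SUP y\<in>{y. y \<le> b \<and> linf y \<ge> max M1 1}. ereal (linf y powr (- \<theta>)) * \<sigma> y)"
      unfolding r_def using y by (intro SUP_upper) auto
    also have "\<dots> < ereal (- L)" by (rule M1) simp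
    finally have lt: "ereal (r powr (- \<theta>)) * \<sigma> y < ereal (- L)" .
    show ?thesis
    proof (cases "\<sigma> y")
      case (real s)
      then have "r powr (- \<theta>) * s < - L" using lt by simp
      then have "(r powr (- \<theta>) * s) * r powr \<theta> \<le> - L * r powr \<theta>"
        using r by (intro mult_right_mono) auto
      then have "s \<le> - L * r powr \<theta>" using r by (simp add: powr_minus field_simps)
      then show ?thesis using real by (simp add: r_def)
    next
      case PInf then show ?thesis using lt r by simp
    qed simp
  qed
  then show ?thesis by blast
qed

lemma power_powr_div:
  fixes x a :: real
  assumes "0 < x" and "0 < n"
  shows "(x powr (a / real n)) ^ n = x powr a"
proof -
  have "(x powr (a / real n)) ^ n = (x powr (a / real n)) powr real n"
    by (rule powr_realpow[symmetric]) (use assms in simp)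
  also have "\<dots> = x powr a" using assms by (simp add: powr_powr)
  finally show ?thesis .
qed

lemma Psi_gt_witness:
  fixes \<rho> :: "real ^ 'd::finite \<Rightarrow> ereal"
  defines "\<theta> \<equiv> real CARD('d) / (real CARD('d) + 1)"
  assumes v: "1 \<le> v" and Psi: "ereal v < Psi q (ereal k) \<rho>"
  obtains x where "x \<le> q *\<^sub>R 1" and "v < linf x ^ CARD('d)" and "ereal (k - linf x powr \<theta>) < \<rho> x"
proof -
  let ?d = "CARD('d)"
  obtain x where x: "x \<le> q *\<^sub>R 1"
    and ratio: "ereal v < ereal (linf x ^ ?d) / (max 1 (ereal k - \<rho> x)) ^ (?d + 1)"
    using Psi unfolding Psi_def less_SUP_iff by auto
  define r where "r = linf x"
  have r0: "0 \<le> r" by (simp add: r_def linf_nonneg)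
  have "v < r ^ ?d \<and> ereal (k - r powr \<theta>) < \<rho> x"
  proof (cases "\<rho> x")
    case PInf
    then show ?thesis using ratio by (simp add: r_def)
  next
    case MInf
    then show ?thesis using ratio v by simp
  next
    case (real e)
    define D where "D = max 1 (k - e)"
    have D1: "1 \<le> D" by (simp add: D_def)
    have "max 1 (ereal k - \<rho> x) = ereal D" using real by (simp add: D_def max_def)
    then have "v < r ^ ?d / D ^ (?d + 1)" using ratio D1 by (simp add: r_def)
    then have vD: "v * D ^ (?d + 1) < r ^ ?d" using D1 by (simp add: field_simps)
    have D_pow: "1 \<le> D ^ (?d + 1)" using D1 by (rule one_le_power)
    have "v \<le> v * D ^ (?d + 1)" "D ^ (?d + 1) \<le> v * D ^ (?d + 1)"
      using v D_pow by (simp_all add: mult_le_cancel_left1 mult_le_cancel_right1)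
    with vD have vr: "v < r ^ ?d" and D_r: "D ^ (?d + 1) < r ^ ?d" by linarith+
    then have r: "0 < r" using r0 v by (cases "r = 0") (auto simp: power_0_left)
    have root: "r ^ ?d = (r powr \<theta>) ^ (?d + 1)"
      using power_powr_div[of r "?d + 1" "real ?d"] r by (simp add: \<theta>_def add.commute powr_realpow)
    from D_r have "D ^ (?d + 1) < (r powr \<theta>) ^ (?d + 1)" unfolding root .
    then have "D < r powr \<theta>" by (rule power_less_imp_less_base) simp
    then show ?thesis using vr real by (simp add: D_def)
  qed
  then show ?thesis using x that by (simp add: r_def)
qed

lemma Hpp_nonneg: "0 \<le> Hpp P y x t"
  unfolding Hpp_def by (rule SUP_upper2[where i = "[]"]) auto

lemma has_chain_of_Hpp_gt:
  assumes "ereal a < Hpp P y x t" and "real m \<le> a"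
  shows "has_chain P m {(\<eta>, s). vlt y \<eta> \<and> \<eta> \<le> x \<and> 0 < s \<and> s \<le> t}"
proof -
  obtain ps where "sorted_wrt slt ps" "set ps \<subseteq> P \<inter> {(\<eta>, s). vlt y \<eta> \<and> \<eta> \<le> x \<and> 0 < s \<and> s \<le> t}"
    and "a < real (length ps)"
    using assms(1) unfolding Hpp_def less_SUP_iff by auto
  then show ?thesis
    unfolding has_chain_def using assms(2)
    by (intro exI[of _ "take m ps"]) (auto simp: sorted_wrt_take dest: in_set_takeD)
qed

lemma ereal_gt_of_add_gt:
  fixes s H :: ereal and a b k L :: real
  assumes "s \<le> ereal (- (L + 2) * a)" and "ereal (k - b) < s + H" and "0 \<le> H"
    and "- a \<le> k" and "b \<le> a"
  shows "ereal (L * a) < H"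
  using assms by (cases s; cases H) (auto simp: algebra_simps)

(* With c^(d+1) = e 8^(d+1) t, the box of side R_m and height t satisfies the size condition
   of prob_chain_in_box_le with equality. *)
definition box_side :: "real \<Rightarrow> nat \<Rightarrow> nat \<Rightarrow> real" where
  "box_side c d m = (real m / c) powr ((real d + 1) / real d)"

lemma box_side_power:
  assumes "0 < c" "0 < d"
  shows "box_side c d m ^ d = (real m / c) ^ (d + 1)"
proof (cases "m = 0")
  case False
  have e: "(real d + 1) / real d * real d = real (d + 1)" using assms by simp
  have "box_side c d m ^ d = (real m / c) powr ((real d + 1) / real d * real d)"
    using assms False by (simp add: box_side_def powr_powr flip: powr_realpow)
  also have "\<dots> = (real m / c) ^ (d + 1)"
    unfolding e using assms False by (intro powr_realpow) simp
  finally show ?thesis .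
qed (use assms in \<open>simp add: box_side_def\<close>)

lemma le_box_side:
  assumes c: "0 < c" and d: "0 < d" and a: "0 \<le> a"
    and m: "c * a powr (real d / (real d + 1)) \<le> real m"
  shows "a \<le> box_side c d m"
proof -
  have "a powr (real d / (real d + 1)) \<le> real m / c" using m c by (simp add: field_simps)
  then have "(a powr (real d / (real d + 1))) powr ((real d + 1) / real d)
      \<le> (real m / c) powr ((real d + 1) / real d)"
    by (intro powr_mono2) auto
  then show ?thesis using a d by (simp add: box_side_def powr_powr)
qed

lemma chain_length_bounds:
  fixes c \<rho> q \<theta> :: real
  assumes c: "0 < c" and \<rho>: "1 \<le> \<rho>" "q \<le> \<rho>" and q: "0 < q" and \<theta>: "0 < \<theta>" "\<theta> \<le> 1"
  defines "m \<equiv> nat \<lceil>c * (\<rho> + q) powr \<theta>\<rceil>"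
  shows "c * (\<rho> + q) powr \<theta> \<le> real m" and "real m \<le> (2 * c + 1) * \<rho> powr \<theta>"
proof -
  have pos: "0 < c * (\<rho> + q) powr \<theta>" using c \<rho> q by simp
  show "c * (\<rho> + q) powr \<theta> \<le> real m" unfolding m_def using pos by linarith
  have "(\<rho> + q) powr \<theta> \<le> (2 * \<rho>) powr \<theta>" using \<rho> q \<theta> by (intro powr_mono2) auto
  also have "\<dots> = 2 powr \<theta> * \<rho> powr \<theta>" by (simp add: powr_mult)
  also have "\<dots> \<le> 2 * \<rho> powr \<theta>"
    using powr_mono[OF \<theta>(2), of 2] by (intro mult_right_mono) auto
  finally have "c * (\<rho> + q) powr \<theta> \<le> 2 * c * \<rho> powr \<theta>" using c by simp
  moreover have "1 \<le> \<rho> powr \<theta>" using \<rho> \<theta> by (intro ge_one_powr_ge_zero) auto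
  moreover have "real m \<le> c * (\<rho> + q) powr \<theta> + 1" unfolding m_def using pos by linarith
  ultimately show "real m \<le> (2 * c + 1) * \<rho> powr \<theta>" by (simp add: algebra_simps)
qed

lemma has_chain_in_box_of_Hpp_gt:
  fixes x y :: "real ^ 'd::finite" and c q :: real
  defines "\<theta> \<equiv> real CARD('d) / (real CARD('d) + 1)"
  defines "m \<equiv> nat \<lceil>c * (linf y + q) powr \<theta>\<rceil>"
  assumes c: "0 < c" and q: "0 < q" and x: "x \<le> q *\<^sub>R 1"
    and y: "1 \<le> linf y" "q \<le> linf y"
    and H: "ereal ((2 * c + 1) * linf y powr \<theta>) < Hpp P y x t"
  shows "c * (linf y + q) powr \<theta> \<le> real m"
    and "has_chain P m (space_time_box (q - box_side c CARD('d) m) (box_side c CARD('d) m) t)"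
proof -
  let ?R = "box_side c CARD('d) m"
  have \<theta>: "0 < \<theta>" "\<theta> \<le> 1" by (auto simp: \<theta>_def)
  have m: "c * (linf y + q) powr \<theta> \<le> real m" "real m \<le> (2 * c + 1) * linf y powr \<theta>"
    using chain_length_bounds[OF c y(1,2) q \<theta>] unfolding m_def by auto
  then show "c * (linf y + q) powr \<theta> \<le> real m" by simp
  have wide: "linf y + q \<le> ?R"
    using m(1) y q c by (intro le_box_side) (auto simp: \<theta>_def)
  show "has_chain P m (space_time_box (q - ?R) ?R t)"
  proof (rule has_chain_mono[OF has_chain_of_Hpp_gt[OF H m(2)]], safe)
    fix \<eta> s assume \<eta>: "vlt y \<eta>" "\<eta> \<le> x" and s: "0 < s" "s \<le> t"
    have "q - ?R < \<eta> $ j \<and> \<eta> $ j \<le> q" for j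
    proof -
      have "y $ j < \<eta> $ j" "\<eta> $ j \<le> x $ j" using \<eta> by (simp_all add: vlt_def less_eq_vec_def)
      moreover have "- linf y \<le> y $ j" "x $ j \<le> q"
        using linf_ge[of y j] x by (auto simp: less_eq_vec_def)
      ultimately show ?thesis using wide by linarith
    qed
    then show "(\<eta>, s) \<in> space_time_box (q - ?R) ?R t" using s by (simp add: space_time_box_def)
  qed
qed

lemma chain_of_large_Psi:
  fixes \<sigma> :: "real ^ 'd::finite \<Rightarrow> ereal" and P :: "((real ^ 'd) \<times> real) set"
  defines "\<theta> \<equiv> real CARD('d) / (real CARD('d) + 1)"
  assumes q: "0 < q" and c: "0 < c"
    and decay: "\<And>y. y \<le> q *\<^sub>R 1 \<Longrightarrow> X \<le> linf y \<Longrightarrow> \<sigma> y \<le> ereal (- (2 * c + 3) * linf y powr \<theta>)"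
    and X: "1 + q \<le> X" "\<bar>k\<bar> \<le> X" and v: "(X ^ 2) ^ CARD('d) \<le> v"
    and Psi: "ereal v < Psi q (ereal k) (evolve \<sigma> P t)"
  shows "\<exists>m. c * v powr (1 / (real CARD('d) + 1)) \<le> real m \<and>
    has_chain P m (space_time_box (q - box_side c CARD('d) m) (box_side c CARD('d) m) t)"
proof -
  let ?d = "CARD('d)"
  have \<theta>: "0 < \<theta>" "\<theta> \<le> 1" "1/2 \<le> \<theta>" by (auto simp: \<theta>_def field_simps)
  have X1: "1 \<le> X" and XX: "X \<le> X ^ 2" using X q by (auto simp: power2_eq_square)
  have v1: "1 \<le> v" using X1 v by (meson one_le_power order_trans)
  obtain x where x: "x \<le> q *\<^sub>R 1" and vr: "v < linf x ^ ?d"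
    and evolve_x: "ereal (k - linf x powr \<theta>) < evolve \<sigma> P t x"
    using Psi_gt_witness[OF v1 Psi] unfolding \<theta>_def by blast
  define r where "r = linf x"
  have "X ^ 2 < r"
  proof (rule ccontr)
    assume "\<not> X ^ 2 < r"
    then have "r ^ ?d \<le> (X ^ 2) ^ ?d" using linf_nonneg[of x] by (intro power_mono) (auto simp: r_def)
    then show False using vr v by (simp add: r_def)
  qed
  then have r: "q < r" "1 \<le> r" using X XX q by auto
  have X_le: "X \<le> r powr \<theta>"
  proof -
    have "X = (X ^ 2) powr (1/2)" using X1 by (simp add: powr_half_sqrt)
    also have "\<dots> \<le> r powr (1/2)" using \<open>X ^ 2 < r\<close> by (intro powr_mono2) auto
    also have "\<dots> \<le> r powr \<theta>" using r \<theta> by (intro powr_mono) auto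
    finally show ?thesis .
  qed
  obtain y where yx: "y \<le> x" and y: "ereal (k - r powr \<theta>) < \<sigma> y + Hpp P y x t"
    using evolve_x unfolding evolve_def less_SUP_iff r_def by auto
  define \<rho> where "\<rho> = linf y"
  have r\<rho>: "r \<le> \<rho>" using linf_le_linf_below[OF x _ yx] r by (simp add: r_def \<rho>_def)
  have r\<rho>_\<theta>: "r powr \<theta> \<le> \<rho> powr \<theta>" using r\<rho> r \<theta> by (intro powr_mono2) auto
  have "X \<le> \<rho>" using XX \<open>X ^ 2 < r\<close> r\<rho> by linarith
  then have "\<sigma> y \<le> ereal (- ((2 * c + 1) + 2) * \<rho> powr \<theta>)"
    using decay[OF order_trans[OF yx x]] by (simp add: \<rho>_def algebra_simps)
  moreover have "- (\<rho> powr \<theta>) \<le> k" using X X_le r\<rho>_\<theta> by linarith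
  \<comment> \<open>the decay rate \<open>2 * c + 3\<close> pays for k and \<open>r powr \<theta>\<close> and leaves a long chain\<close>
  ultimately have "ereal ((2 * c + 1) * \<rho> powr \<theta>) < Hpp P y x t"
    using ereal_gt_of_add_gt[OF _ y Hpp_nonneg _ r\<rho>_\<theta>] by blast
  moreover have \<rho>: "1 \<le> \<rho>" "q \<le> \<rho>" using r r\<rho> by auto
  moreover define m where "m = nat \<lceil>c * (\<rho> + q) powr \<theta>\<rceil>"
  ultimately have box_chain: "c * (\<rho> + q) powr \<theta> \<le> real m"
    "has_chain P m (space_time_box (q - box_side c ?d m) (box_side c ?d m) t)"
    using has_chain_in_box_of_Hpp_gt[OF c q x] unfolding m_def \<theta>_def \<rho>_def by blast+
  have "v powr (1 / (real ?d + 1)) \<le> (r ^ ?d) powr (1 / (real ?d + 1))"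
    using vr v1 by (intro powr_mono2) (auto simp: r_def)
  also have "\<dots> = r powr \<theta>"
    using r by (simp add: \<theta>_def powr_powr flip: powr_realpow)
  also have "\<dots> \<le> (\<rho> + q) powr \<theta>" using r r\<rho> q \<theta> by (intro powr_mono2) auto
  finally have "c * v powr (1 / (real ?d + 1)) \<le> c * (\<rho> + q) powr \<theta>" using c by simp
  with box_chain show ?thesis by (blast intro: order_trans)
qed

lemma long_chain_of_large_Psi:
  fixes \<sigma> :: "real ^ 'd::finite \<Rightarrow> ereal"
  assumes \<sigma>: "\<sigma> \<in> state_space" and q: "0 < q" and c: "0 < c"
  obtains v0 where "0 < v0"
    and "\<And>v P. v0 \<le> v \<Longrightarrow> ereal v < Psi q (ereal k) (evolve \<sigma> P t) \<Longrightarrow>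
      \<exists>m. c * v powr (1 / (real CARD('d) + 1)) \<le> real m \<and>
        has_chain P m (space_time_box (q - box_side c CARD('d) m) (box_side c CARD('d) m) t)"
proof -
  obtain M0 where M0: "\<forall>y. y \<le> q *\<^sub>R 1 \<and> M0 \<le> linf y \<longrightarrow>
      \<sigma> y \<le> ereal (- (2 * c + 3) * linf y powr (real CARD('d) / (real CARD('d) + 1)))"
    using state_space_decay[OF \<sigma>] by blast
  define X where "X = 1 + q + \<bar>M0\<bar> + \<bar>k\<bar>"
  have X: "1 + q \<le> X" "\<bar>k\<bar> \<le> X" "M0 \<le> X" using q by (auto simp: X_def)
  have decay: "\<sigma> y \<le> ereal (- (2 * c + 3) * linf y powr (real CARD('d) / (real CARD('d) + 1)))"
    if "y \<le> q *\<^sub>R 1" "X \<le> linf y" for y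
    using M0 X(3) that by auto
  show thesis
  proof (rule that)
    have "1 \<le> X ^ 2" using X(1) q by (simp add: one_le_power)
    then show "0 < (X ^ 2) ^ CARD('d)" using one_le_power[of "X ^ 2" "CARD('d)"] by linarith
  next
    fix v P assume v: "(X ^ 2) ^ CARD('d) \<le> v" and Psi: "ereal v < Psi q (ereal k) (evolve \<sigma> P t)"
    show "\<exists>m. c * v powr (1 / (real CARD('d) + 1)) \<le> real m \<and>
        has_chain P m (space_time_box (q - box_side c CARD('d) m) (box_side c CARD('d) m) t)"
      by (rule chain_of_large_Psi[OF q c decay X(1,2) v Psi])
  qed
qed

section \<open>The tail estimate\<close>

(* On the tail (1/2)^m <= (1/2)^(x/2) * r^m with r = 1/sqrt 2, and 1/(1 - r) <= 4. *)
lemma summable_geometric_tail_le: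
  fixes x :: real and f :: "nat \<Rightarrow> real"
  assumes f0: "\<And>m. 0 \<le> f m" and f: "\<And>m. f m \<le> (if x \<le> real m then (1/2) ^ m else 0)"
  shows "summable f \<and> suminf f \<le> 4 * exp (- (ln 2 / 2) * x)"
proof -
  define r :: real where "r = (1/2) powr (1/2)"
  have r0: "0 < r" by (simp add: r_def)
  have "r = sqrt (1/2)" by (simp add: r_def powr_half_sqrt)
  also have "\<dots> \<le> sqrt ((3/4)\<^sup>2)" by (rule real_sqrt_le_mono) (simp add: power2_eq_square)
  finally have r34: "r \<le> 3/4" by simp
  define K where "K = (1/2 :: real) powr (x / 2)"
  have K: "K = exp (- (ln 2 / 2) * x)" by (simp add: K_def powr_def ln_div)
  have half_pow: "(1/2 :: real) powr (real m / 2) = r ^ m" for m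
    using r0 by (simp add: r_def powr_powr powr_realpow[symmetric] del: powr_realpow)
  have f_le: "f m \<le> K * r ^ m" for m
  proof (cases "x \<le> real m")
    case True
    have "(1/2 :: real) ^ m = (1/2) powr (real m / 2) * (1/2) powr (real m / 2)"
      by (simp add: powr_realpow[symmetric] powr_add[symmetric] del: powr_realpow)
    also have "\<dots> \<le> (1/2) powr (x / 2) * (1/2) powr (real m / 2)"
      using True by (intro mult_right_mono powr_mono') auto
    also have "\<dots> = K * r ^ m" by (simp add: K_def half_pow)
    finally show ?thesis using f[of m] True by simp
  next
    case False
    have "0 \<le> K * r ^ m" using r0 by (simp add: K_def)
    then show ?thesis using f[of m] False by simp
  qed
  have geom: "(\<lambda>m. K * r ^ m) sums (K * (1 / (1 - r)))"
    using r0 r34 by (intro sums_mult geometric_sums) auto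
  have "summable f"
    using f0 f_le by (intro summable_comparison_test'[OF sums_summable[OF geom]]) auto
  moreover have "suminf f \<le> K * (1 / (1 - r))"
    using suminf_le[OF f_le \<open>summable f\<close> sums_summable[OF geom]] sums_unique[OF geom] by simp
  moreover have "K * (1 / (1 - r)) \<le> K * 4"
    using r34 by (intro mult_left_mono) (auto simp: K_def field_simps)
  ultimately show ?thesis unfolding K by simp
qed

lemma (in prob_space) prob_Union_geometric_tail_le:
  fixes x :: real and E :: "nat \<Rightarrow> 'a set"
  assumes E: "\<And>m. x \<le> real m \<Longrightarrow> \<exists>A\<in>events. E m \<subseteq> A \<and> prob A \<le> (1/2) ^ m"
  shows "\<exists>A\<in>events. (\<Union>m\<in>{m. x \<le> real m}. E m) \<subseteq> A \<and> prob A \<le> 4 * exp (- (ln 2 / 2) * x)"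
proof -
  obtain B where B: "\<And>m. x \<le> real m \<Longrightarrow> B m \<in> events \<and> E m \<subseteq> B m \<and> prob (B m) \<le> (1/2) ^ m"
    using E by metis
  define B' where "B' m = (if x \<le> real m then B m else {})" for m
  have B'_events: "range B' \<subseteq> events" using B by (auto simp: B'_def)
  have B'_prob: "prob (B' m) \<le> (if x \<le> real m then (1/2) ^ m else 0)" for m
    using B by (simp add: B'_def)
  have tail: "summable (\<lambda>m. prob (B' m)) \<and> (\<Sum>m. prob (B' m)) \<le> 4 * exp (- (ln 2 / 2) * x)"
    by (rule summable_geometric_tail_le[OF _ B'_prob]) simp
  have "prob (\<Union>m. B' m) \<le> (\<Sum>m. prob (B' m))"
    using B'_events tail by (intro finite_measure_subadditive_countably) auto
  moreover have "(\<Union>m\<in>{m. x \<le> real m}. E m) \<subseteq> (\<Union>m. B' m)"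
    using B by (force simp: B'_def)
  moreover have "(\<Union>m. B' m) \<in> events" using B'_events by auto
  ultimately show ?thesis using tail by (meson order_trans)
qed

lemma prob_long_chain_in_some_box_le:
  fixes PP :: "'w \<Rightarrow> ((real ^ 'd::finite) \<times> real) set" and q t x :: real
  defines "c \<equiv> 8 * (exp 1 * t) powr (1 / (real CARD('d) + 1))"
  assumes pp: "poisson_process M PP" and t: "0 < t" and x: "0 < x"
  shows "\<exists>A\<in>sets M. {\<omega>\<in>space M. \<exists>m. x \<le> real m \<and>
      has_chain (PP \<omega>) m (space_time_box (q - box_side c CARD('d) m) (box_side c CARD('d) m) t)} \<subseteq> A
    \<and> measure M A \<le> 4 * exp (- (ln 2 / 2) * x)"
proof -
  interpret prob_space M using pp by (simp add: poisson_process_def)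
  let ?d = "CARD('d)" and ?R = "box_side c CARD('d)"
  have c: "0 < c" using t by (simp add: c_def)
  have root: "((exp 1 * t) powr (1 / (real ?d + 1))) ^ (?d + 1) = exp 1 * t"
    using power_powr_div[of "exp 1 * t" "?d + 1" 1] t by (simp add: add.commute)
  have c_pow: "c ^ (?d + 1) = exp 1 * 8 ^ (?d + 1) * t"
    unfolding c_def power_mult_distrib root by simp
  define E where "E m = {\<omega>\<in>space M. has_chain (PP \<omega>) m (space_time_box (q - ?R m) (?R m) t)}" for m
  have "\<exists>A\<in>events. E m \<subseteq> A \<and> prob A \<le> (1/2) ^ m" if m: "x \<le> real m" for m
    unfolding E_def
  proof (rule prob_chain_in_box_le[OF pp _ t])
    show "0 < ?R m" using c m x by (simp add: box_side_def)
    have "exp 1 * 8 ^ (?d + 1) * ?R m ^ ?d * t = (exp 1 * 8 ^ (?d + 1) * t) * (real m / c) ^ (?d + 1)"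
      unfolding box_side_power[OF c zero_less_card_finite] by (simp only: mult_ac)
    also have "\<dots> = real m ^ (?d + 1)"
      unfolding c_pow[symmetric] power_mult_distrib[symmetric] using c by simp
    finally show "exp 1 * 8 ^ (?d + 1) * ?R m ^ ?d * t \<le> real m ^ (?d + 1)" by simp
  qed
  then obtain A where "A \<in> events" "(\<Union>m\<in>{m. x \<le> real m}. E m) \<subseteq> A"
    and "prob A \<le> 4 * exp (- (ln 2 / 2) * x)"
    using prob_Union_geometric_tail_le[of x E] by blast
  moreover have "{\<omega>\<in>space M. \<exists>m. x \<le> real m \<and> has_chain (PP \<omega>) m (space_time_box (q - ?R m) (?R m) t)}
      = (\<Union>m\<in>{m. x \<le> real m}. E m)"
    by (auto simp: E_def)
  ultimately show ?thesis by auto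
qed

lemma prob_Psi_gt_le:
  fixes \<sigma> :: "real ^ 'd::finite \<Rightarrow> ereal" and q t :: real
  defines "c \<equiv> 8 * (exp 1 * t) powr (1 / (real CARD('d) + 1))"
    and "\<theta> \<equiv> 1 / (real CARD('d) + 1)"
  assumes \<sigma>: "\<sigma> \<in> state_space" and finite_value: "\<exists>x\<in>{-q *\<^sub>R 1 .. q *\<^sub>R 1}. \<sigma> x \<noteq> \<infinity> \<and> \<sigma> x \<noteq> -\<infinity>"
    and q: "0 < q" and t: "0 < t"
  shows "\<exists>v0. \<forall>(M :: 'w measure) PP. poisson_process M PP \<longrightarrow> (\<forall>v\<ge>v0. \<exists>A\<in>sets M.
      {\<omega>\<in>space M. Psi q (Imin {-q *\<^sub>R 1 .. q *\<^sub>R 1} \<sigma>) (evolve \<sigma> (PP \<omega>) t) > ereal v} \<subseteq> A \<and>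
      measure M A \<le> 4 * exp (- (c * ln 2 / 2) * v powr \<theta>))"
proof -
  have c: "0 < c" using t by (simp add: c_def)
  obtain k where k: "Imin {-q *\<^sub>R 1 .. q *\<^sub>R 1} \<sigma> = ereal k" using Imin_finite[OF \<sigma> q] finite_value by blast
  obtain v0 where "0 < v0" and chain: "\<And>v P. v0 \<le> v \<Longrightarrow> ereal v < Psi q (ereal k) (evolve \<sigma> P t) \<Longrightarrow>
      \<exists>m. c * v powr \<theta> \<le> real m \<and>
        has_chain P m (space_time_box (q - box_side c CARD('d) m) (box_side c CARD('d) m) t)"
    using long_chain_of_large_Psi[OF \<sigma> q c] unfolding \<theta>_def by blast
  show ?thesis
  proof (intro exI[of _ v0] allI impI)
    fix M :: "'w measure" and PP :: "'w \<Rightarrow> ((real ^ 'd) \<times> real) set" and v :: real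
    assume pp: "poisson_process M PP" and v: "v0 \<le> v"
    have "0 < c * v powr \<theta>" using c \<open>0 < v0\<close> v by simp
    from prob_long_chain_in_some_box_le[OF pp t this, of q, folded c_def \<theta>_def]
    obtain A where "A \<in> sets M" and A: "{\<omega>\<in>space M. \<exists>m. c * v powr \<theta> \<le> real m \<and>
        has_chain (PP \<omega>) m (space_time_box (q - box_side c CARD('d) m) (box_side c CARD('d) m) t)} \<subseteq> A"
      and "measure M A \<le> 4 * exp (- (ln 2 / 2) * (c * v powr \<theta>))"
      by blast
    moreover have "{\<omega>\<in>space M. Psi q (Imin {-q *\<^sub>R 1 .. q *\<^sub>R 1} \<sigma>) (evolve \<sigma> (PP \<omega>) t) > ereal v} \<subseteq> A"
    proof safe
      fix \<omega> assume "\<omega> \<in> space M" and "ereal v < Psi q (Imin {-q *\<^sub>R 1 .. q *\<^sub>R 1} \<sigma>) (evolve \<sigma> (PP \<omega>) t)"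
      with chain[OF v] A show "\<omega> \<in> A" unfolding k by blast
    qed
    ultimately show "\<exists>A\<in>sets M. {\<omega>\<in>space M. Psi q (Imin {-q *\<^sub>R 1 .. q *\<^sub>R 1} \<sigma>) (evolve \<sigma> (PP \<omega>) t) > ereal v} \<subseteq> A
        \<and> measure M A \<le> 4 * exp (- (c * ln 2 / 2) * v powr \<theta>)"
      by (auto simp: mult_ac)
  qed
qed

theorem lemma7p7:
  fixes q t :: real
  assumes d2: "CARD('d) \<ge> 2"
    and q: "q > 0" and t: "t > 0"
  shows "\<exists>C1 C2. 0 < C1 \<and> 0 < C2 \<and>
    (\<forall>\<sigma> :: real ^ 'd \<Rightarrow> ereal.
       \<sigma> \<in> state_space \<and>
       (\<exists>x\<in>{-q *\<^sub>R 1 .. q *\<^sub>R 1}. \<sigma> x \<noteq> \<infinity> \<and> \<sigma> x \<noteq> -\<infinity>) \<longrightarrow>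
       (\<exists>v0. \<forall>(M :: 'w measure) PP. poisson_process M PP \<longrightarrow>
          (\<forall>v\<ge>v0. \<exists>A\<in>sets M.
             {\<omega>\<in>space M. Psi q (Imin {-q *\<^sub>R 1 .. q *\<^sub>R 1} \<sigma>) (evolve \<sigma> (PP \<omega>) t) > ereal v} \<subseteq> A \<and>
             measure M A \<le> C1 * exp (- C2 * v powr (1 / (real CARD('d) + 1))))))"
proof -
  define c where "c = 8 * (exp 1 * t) powr (1 / (real CARD('d) + 1))"
  have "0 < c" using t by (simp add: c_def)
  show ?thesis
  proof (rule exI[of _ "4::real"], rule exI[of _ "c * ln 2 / 2"], intro conjI allI impI)
    show "(0::real) < 4" "0 < c * ln 2 / 2" using \<open>0 < c\<close> by simp_all
  qed (rule prob_Psi_gt_le[where 'd = 'd, OF _ _ q t, folded c_def]; blast)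
qed

end
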